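(* Let $p$ be an odd prime and let $k,n$ be positive integers. If either $k\equiv n\equiv 0\pmod{p-1}$ or $k\equiv n\equiv 1\pmod{p-1}$, then \[ B^{(-k)}_{n}\equiv 2\pmod p. \]
   Context: For any integer $k$, let $\mathrm{Li}_k(t)=\sum_{n=1}^{\infty} t^n/n^k$. The poly-Bernoulli numbers $B^{(k)}_n$ ($n\ge 0$) are defined by $\frac{\mathrm{Li}_k(1-e^{-t})}{1-e^{-t}}=\sum_{n=0}^{\infty}B^{(k)}_n\frac{t^n}{n!}$. For negative upper index these are integers. *)

theory Defs
  imports "HOL-Computational_Algebra.Computational_Algebra" "HOL-Number_Theory.Number_Theory"
begin

text \<open>For k a natural number, Li_{-k}(x)/x = sum_{m>=1} m^k x^(m-1), as a formal power series.\<close>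
definition Li_neg_div_x :: "nat \<Rightarrow> rat fps" where
  "Li_neg_div_x k = Abs_fps (\<lambda>i. of_nat (i + 1) ^ k)"

text \<open>Poly-Bernoulli numbers with negative upper index -k: n! times the n-th coefficient of
  Li_{-k}(1 - e^{-t}) / (1 - e^{-t}).\<close>
definition polyBernoulli_neg :: "nat \<Rightarrow> nat \<Rightarrow> rat" where
  "polyBernoulli_neg k n =
     fact n * fps_nth (fps_compose (Li_neg_div_x k) (1 - fps_exp (-1))) n"

end

theory Submission
  imports Defs
begin

text \<open>Expanding \<open>(1 - exp (-t)) ^ m\<close> binomially gives
  \<open>B(-k, n) = (-1) ^ n * (\<Sum>m\<le>n. (m + 1) ^ k * E n m)\<close> with the integers
  \<open>E n m = (\<Sum>j\<le>m. (-1) ^ j * (m choose j) * j ^ n)\<close>, which vanish for \<open>m > n\<close>.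
  By Fermat's little theorem, positive exponents matter modulo \<open>p\<close> only through their residues
  modulo \<open>p - 1\<close>, so \<open>B(-k, n) mod p\<close> depends only on \<open>k mod (p - 1)\<close> and \<open>n mod (p - 1)\<close>.
  This reduces the claim to \<open>B(-1, 1) = 2\<close> and to \<open>k = n = p - 1\<close>. There, again by Fermat,
  \<open>E (p - 1) m \<equiv> -1\<close> for \<open>0 < m < p\<close>; the summands for \<open>m = 0\<close> and \<open>m = p - 1\<close>
  vanish mod \<open>p\<close> and the other \<open>p - 2\<close> are \<open>\<equiv> -1\<close>, giving \<open>2 - p \<equiv> 2\<close>.\<close>

definition alt_choose_power_sum :: "nat \<Rightarrow> nat \<Rightarrow> int" where
  "alt_choose_power_sum n m = (\<Sum>j\<le>m. (-1)^j * int (m choose j) * int j ^ n)"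

lemma one_minus_fps_exp_neg_power:
  "(1 - fps_exp (-1 :: 'a :: field_char_0)) ^ m =
     (\<Sum>j\<le>m. fps_const (of_nat (m choose j) * (-1)^j) * fps_exp (- of_nat j))"
proof -
  have "(1 - fps_exp (-1 :: 'a)) ^ m = (- fps_exp (-1) + 1) ^ m"
    by simp
  also have "\<dots> = (\<Sum>j\<le>m. of_nat (m choose j) * (- fps_exp (-1 :: 'a)) ^ j * 1 ^ (m - j))"
    by (rule binomial_ring)
  also have "\<dots> = (\<Sum>j\<le>m. fps_const (of_nat (m choose j) * (-1)^j) * fps_exp (- of_nat j))"
  proof (rule sum.cong)
    fix j
    have "(- fps_exp (-1 :: 'a)) ^ j = fps_const ((-1)^j) * fps_exp (- of_nat j)"
      by (simp add: power_minus' fps_exp_power_mult fps_const_neg [symmetric]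
          fps_const_power [symmetric])
    then show "of_nat (m choose j) * (- fps_exp (-1 :: 'a)) ^ j * 1 ^ (m - j) =
        fps_const (of_nat (m choose j) * (-1)^j) * fps_exp (- of_nat j)"
      by (simp add: fps_of_nat fps_const_mult [symmetric] mult.assoc)
  qed simp
  finally show ?thesis .
qed

lemma fact_times_nth_one_minus_fps_exp_neg_power:
  "fact n * ((1 - fps_exp (-1 :: 'a :: field_char_0)) ^ m $ n) =
     of_int ((-1)^n * alt_choose_power_sum n m)"
proof -
  have "fact n * ((1 - fps_exp (-1 :: 'a)) ^ m $ n) =
      (\<Sum>j\<le>m. fact n * (of_nat (m choose j) * (-1)^j * ((- of_nat j) ^ n / fact n)))"
    by (simp add: one_minus_fps_exp_neg_power fps_sum_nth sum_distrib_left)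
  also have "\<dots> = (\<Sum>j\<le>m. of_int ((-1)^n * ((-1)^j * int (m choose j) * int j ^ n)))"
    by (rule sum.cong) (simp_all add: power_minus')
  also have "\<dots> = of_int ((-1)^n * alt_choose_power_sum n m)"
    by (simp add: alt_choose_power_sum_def sum_distrib_left)
  finally show ?thesis .
qed

lemma alt_choose_power_sum_eq_0:
  assumes "n < m"
  shows "alt_choose_power_sum n m = 0"
proof -
  have "(1 - fps_exp (-1 :: rat)) ^ m $ n = 0"
    using assms by (simp add: startsby_zero_power_prefix)
  then have "(of_int ((-1)^n * alt_choose_power_sum n m) :: rat) = 0"
    using fact_times_nth_one_minus_fps_exp_neg_power[of n m, where 'a = rat] by simp
  then show ?thesis
    by simp
qed

definition poly_bernoulli_neg_int :: "nat \<Rightarrow> nat \<Rightarrow> int" where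
  "poly_bernoulli_neg_int k n =
     (-1)^n * (\<Sum>m\<le>n. (int m + 1)^k * alt_choose_power_sum n m)"

lemma polyBernoulli_neg_eq_of_int:
  "polyBernoulli_neg k n = of_int (poly_bernoulli_neg_int k n)"
proof -
  have "polyBernoulli_neg k n =
      (\<Sum>m\<le>n. of_nat (m + 1)^k * (fact n * ((1 - fps_exp (-1 :: rat)) ^ m $ n)))"
    unfolding polyBernoulli_neg_def fps_compose_nth Li_neg_div_x_def
    by (simp add: sum_distrib_left atLeast0AtMost algebra_simps)
  also have "\<dots> = of_int (poly_bernoulli_neg_int k n)"
    by (simp add: fact_times_nth_one_minus_fps_exp_neg_power poly_bernoulli_neg_int_def
        sum_distrib_left algebra_simps)
  finally show ?thesis .
qed

lemma poly_bernoulli_neg_int_upto: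
  assumes "n \<le> N"
  shows "poly_bernoulli_neg_int k n =
           (-1)^n * (\<Sum>m\<le>N. (int m + 1)^k * alt_choose_power_sum n m)"
  unfolding poly_bernoulli_neg_int_def
  using assms by (intro arg_cong[where f = "(*) _"] sum.mono_neutral_left)
    (auto simp: alt_choose_power_sum_eq_0)

lemma fermat_theorem_int:
  fixes x :: int
  assumes "prime p" and "\<not> int p dvd x"
  shows "[x ^ (p - 1) = 1] (mod int p)"
proof -
  have "residues (int p)"
    using prime_gt_1_nat[OF assms(1)] by (simp add: residues_def)
  moreover have "coprime x (int p)"
    using assms prime_imp_coprime[of "int p" x] by (simp add: coprime_commute)
  ultimately show ?thesis
    using residues.euler_theorem totient_prime[OF assms(1)] by fastforce
qed

lemma power_cong_power_if_le:
  fixes x :: int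
  assumes "prime p" and "0 < a" and "a \<le> b" and "[a = b] (mod (p - 1))"
  shows "[x ^ a = x ^ b] (mod int p)"
proof -
  have "(p - 1) dvd (b - a)"
    using cong_altdef_nat[OF assms(3)] cong_sym[OF assms(4)] by blast
  then obtain q where "b - a = (p - 1) * q"
    by (rule dvdE)
  with assms(3) have "b = a + (p - 1) * q"
    by simp
  then have b: "x ^ b = x ^ a * (x ^ (p - 1)) ^ q"
    by (simp add: power_add power_mult)
  show ?thesis
  proof (cases "int p dvd x")
    case True
    have "int p dvd x ^ a"
      using dvd_power_le[OF True, of 1 a] assms(2) by simp
    moreover have "int p dvd x ^ b"
      using dvd_power_le[OF True, of 1 b] assms(2,3) by simp
    ultimately show ?thesis
      by (simp add: cong_iff_dvd_diff)
  next
    case False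
    have "[(x ^ (p - 1)) ^ q = 1 ^ q] (mod int p)"
      by (intro cong_pow fermat_theorem_int assms(1) False)
    then have "[x ^ a * (x ^ (p - 1)) ^ q = x ^ a * 1] (mod int p)"
      by (intro cong_scalar_left) simp
    then show ?thesis
      by (simp add: b cong_sym_eq)
  qed
qed

lemma power_cong_power_mod_prime:
  fixes x :: int
  assumes "prime p" and "0 < a" and "0 < b" and "[a = b] (mod (p - 1))"
  shows "[x ^ a = x ^ b] (mod int p)"
proof (cases "a \<le> b")
  case True
  then show ?thesis
    using assms power_cong_power_if_le by blast
next
  case False
  then show ?thesis
    using assms power_cong_power_if_le[of p b a x] by (simp add: cong_sym_eq)
qed

lemma alt_choose_power_sum_cong:
  assumes "prime p" and "0 < n" and "0 < n'" and "[n = n'] (mod (p - 1))"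
  shows "[alt_choose_power_sum n m = alt_choose_power_sum n' m] (mod int p)"
  unfolding alt_choose_power_sum_def
  using power_cong_power_mod_prime[OF assms] by (intro cong_sum cong_scalar_left)

lemma poly_bernoulli_neg_int_cong:
  assumes "prime p" and "0 < k" and "0 < k'" and "[k = k'] (mod (p - 1))"
    and "0 < n" and "0 < n'" and "[n = n'] (mod (p - 1))"
  shows "[poly_bernoulli_neg_int k n = poly_bernoulli_neg_int k' n'] (mod int p)"
  unfolding poly_bernoulli_neg_int_upto[OF max.cobounded1, of k n n']
    poly_bernoulli_neg_int_upto[OF max.cobounded2, of k' n' n]
  using power_cong_power_mod_prime[OF assms(1,5-7)] power_cong_power_mod_prime[OF assms(1-4)]
    alt_choose_power_sum_cong[OF assms(1,5-7)]
  by (intro cong_mult cong_sum)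

lemma poly_bernoulli_neg_int_1_1: "poly_bernoulli_neg_int 1 1 = 2"
  by (simp add: poly_bernoulli_neg_int_def alt_choose_power_sum_def)

lemma alt_choose_power_sum_prime_minus_one:
  assumes "prime p" and "0 < m" and "m < p"
  shows "[alt_choose_power_sum (p - 1) m = -1] (mod int p)"
proof -
  have "[alt_choose_power_sum (p - 1) m =
         (\<Sum>j\<le>m. (-1)^j * int (m choose j) - (if j = 0 then 1 else 0))] (mod int p)"
    unfolding alt_choose_power_sum_def
  proof (rule cong_sum)
    fix j
    assume "j \<in> {..m}"
    show "[(-1)^j * int (m choose j) * int j ^ (p - 1) =
           (-1)^j * int (m choose j) - (if j = 0 then 1 else 0)] (mod int p)"
    proof (cases "j = 0")
      case True
      then show ?thesis
        using prime_gt_1_nat[OF assms(1)] by (simp add: power_0_left)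
    next
      case False
      with \<open>j \<in> {..m}\<close> assms(3) have "\<not> int p dvd int j"
        by (auto dest: dvd_imp_le)
      then have "[int j ^ (p - 1) = 1] (mod int p)"
        by (rule fermat_theorem_int[OF assms(1)])
      then show ?thesis
        using False cong_scalar_left by fastforce
    qed
  qed
  also have "(\<Sum>j\<le>m. (-1)^j * int (m choose j) - (if j = 0 then 1 else 0)) = -1"
    using choose_alternating_sum[OF assms(2), where 'a = int] by (simp add: sum_subtractf)
  finally show ?thesis .
qed

lemma poly_bernoulli_neg_int_prime_minus_one:
  assumes "prime p"
  shows "[poly_bernoulli_neg_int (p - 1) (p - 1) = 2] (mod int p)"
proof -
  define g :: "nat \<Rightarrow> int"
    where "g m = (if m = 0 then 1 else 0) + (if m = p - 1 then 1 else 0) - 1" for m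
  have p: "2 \<le> p"
    using prime_ge_2_nat[OF assms] .
  have sign: "[(-1) ^ (p - 1) = (1 :: int)] (mod int p)"
    using p by (intro fermat_theorem_int assms) auto
  have summand: "[(int m + 1) ^ (p - 1) * alt_choose_power_sum (p - 1) m = g m] (mod int p)"
    if m_le: "m \<le> p - 1" for m
  proof -
    consider "m = 0" | "m = p - 1" | "0 < m" "m < p - 1"
      using m_le by linarith
    then show ?thesis
    proof cases
      case 1
      then show ?thesis
        using p by (simp add: g_def alt_choose_power_sum_def power_0_left)
    next
      case 2
      then have "int p dvd (int m + 1) ^ (p - 1) * alt_choose_power_sum (p - 1) m"
        using p by (simp add: of_nat_diff)
      then show ?thesis
        using 2 p by (simp add: g_def cong_0_iff)
    next
      case 3
      have "\<not> p dvd m + 1"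
        using 3 by (auto dest: dvd_imp_le)
      then have not_dvd: "\<not> int p dvd int (m + 1)"
        by (subst int_dvd_int_iff)
      have "[(int m + 1) ^ (p - 1) = 1] (mod int p)"
        using fermat_theorem_int[OF assms not_dvd] by (simp only: of_nat_add of_nat_1)
      moreover have "[alt_choose_power_sum (p - 1) m = -1] (mod int p)"
        using 3 by (intro alt_choose_power_sum_prime_minus_one assms) auto
      ultimately show ?thesis
        using 3 cong_mult by (fastforce simp: g_def)
    qed
  qed
  have "[poly_bernoulli_neg_int (p - 1) (p - 1) = 1 * (\<Sum>m\<le>p - 1. g m)] (mod int p)"
    unfolding poly_bernoulli_neg_int_def using sign summand by (intro cong_mult cong_sum) auto
  also have "1 * (\<Sum>m\<le>p - 1. g m) = 2 - int p"
    using p by (simp add: g_def sum.distrib sum_subtractf of_nat_diff)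
  also have "[2 - int p = 2] (mod int p)"
    by (simp add: cong_def)
  finally show ?thesis .
qed

theorem theorem3p4:
  fixes p k n :: nat
  assumes "prime p" and "odd p" and "k > 0" and "n > 0"
    and "([k = 0] (mod (p - 1)) \<and> [n = 0] (mod (p - 1))) \<or>
         ([k = 1] (mod (p - 1)) \<and> [n = 1] (mod (p - 1)))"
  shows "\<exists>b::int. of_int b = polyBernoulli_neg k n \<and> [b = 2] (mod int p)"
proof -
  have p: "0 < p - 1"
    using prime_gt_1_nat[OF assms(1)] by simp
  have "[poly_bernoulli_neg_int k n = 2] (mod int p)"
    using assms(5)
  proof
    assume "[k = 0] (mod (p - 1)) \<and> [n = 0] (mod (p - 1))"
    then have "[k = p - 1] (mod (p - 1))" and "[n = p - 1] (mod (p - 1))"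
      by (simp_all add: cong_def)
    with assms(1,3,4) p have "[poly_bernoulli_neg_int k n =
        poly_bernoulli_neg_int (p - 1) (p - 1)] (mod int p)"
      by (intro poly_bernoulli_neg_int_cong)
    also have "[poly_bernoulli_neg_int (p - 1) (p - 1) = 2] (mod int p)"
      using assms(1) by (rule poly_bernoulli_neg_int_prime_minus_one)
    finally show ?thesis .
  next
    assume "[k = 1] (mod (p - 1)) \<and> [n = 1] (mod (p - 1))"
    with assms(1,3,4) have "[poly_bernoulli_neg_int k n = poly_bernoulli_neg_int 1 1] (mod int p)"
      by (intro poly_bernoulli_neg_int_cong) auto
    then show ?thesis
      unfolding poly_bernoulli_neg_int_1_1 .
  qed
  then show ?thesis
    using polyBernoulli_neg_eq_of_int[of k n] by auto
qed

end
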